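(* Let $\zeta\in M^0$. If $u_k,u\in\mathrm{Conv}_{\mathrm{coe}}(\mathbb{R}^n)$ are such that $\delta^H_\zeta(u_k,u)\to 0$, then $u_k$ epi-converges to $u$ as $k\to\infty$.
   Context: $M^0$ is the set of continuous, strictly decreasing $\zeta:\mathbb{R}\to(0,\infty)$ with $\int_0^\infty\zeta(t)dt<\infty$. $\mathrm{Conv}_{\mathrm{coe}}(\mathbb{R}^n)$ is the set of proper, lower semicontinuous, convex, coercive functions $u:\mathbb{R}^n\to\mathbb{R}\cup\{+\infty\}$. With $\mathcal{K}^n$ the non-empty compact convex sets and $d_H$ the Hausdorff metric, define $\hat d_H$ on $\mathcal{K}^n\cup\{\emptyset\}$ by $\hat d_H(K,L)=d_H(K,L)$ if both non-empty, $\hat d_H(\emptyset,\emptyset)=0$, and $\hat d_H(K,\emptyset)=\hat d_H(\emptyset,K)=\max\{1,d_H(K,\{0\})\}$ for $K\ne\emptyset$. Then $\delta^H_\zeta(u,v)=\int_0^{\infty}\hat d_H(\{\zeta\circ u\ge s\},\{\zeta\circ v\ge s\})\,ds$, where $\{\zeta\circ u\ge s\}=\{x:\zeta(u(x))\ge s\}$ and $\zeta(+\infty):=0$. Epi-convergence $u_k\to u$: for every $x$, $\liminf_k u_k(x_k)\ge u(x)$ for all $x_k\to x$ and $\limsup_k u_k(x_k)\le u(x)$ for some $x_k\to x$. *)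

theory Defs
  imports "HOL-Analysis.Analysis" "HOL-Library.Extended_Real"
begin

definition M0 :: "(real \<Rightarrow> real) set" where
  "M0 = {\<zeta>. continuous_on UNIV \<zeta> \<and> (\<forall>s t. s < t \<longrightarrow> \<zeta> t < \<zeta> s) \<and>
              (\<forall>t. 0 < \<zeta> t) \<and> set_integrable lborel {0..} \<zeta>}"

text \<open>Extension of zeta to extended reals with zeta(+inf) = 0 (values -inf never occur
  for proper functions).\<close>
definition zeta_ext :: "(real \<Rightarrow> real) \<Rightarrow> ereal \<Rightarrow> real" where
  "zeta_ext \<zeta> v = (case v of ereal r \<Rightarrow> \<zeta> r | PInfty \<Rightarrow> 0 | MInfty \<Rightarrow> 0)"

definition conv_coe :: "('a::euclidean_space \<Rightarrow> ereal) set" where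
  "conv_coe = {u. (\<forall>x. u x \<noteq> -\<infinity>) \<and> (\<exists>x. u x \<noteq> \<infinity>)
      \<and> closed {(x, r::real). u x \<le> ereal r}
      \<and> (\<forall>x y t. 0 \<le> t \<and> t \<le> 1 \<longrightarrow>
            u ((1 - t) *\<^sub>R x + t *\<^sub>R y) \<le> ereal (1 - t) * u x + ereal t * u y)
      \<and> (u \<longlongrightarrow> \<infinity>) at_infinity}"

definition haus_dist :: "'a::metric_space set \<Rightarrow> 'a set \<Rightarrow> real" where
  "haus_dist K L = max (SUP x\<in>K. infdist x L) (SUP y\<in>L. infdist y K)"

definition haus_dist_hat :: "'a::real_normed_vector set \<Rightarrow> 'a set \<Rightarrow> real" where
  "haus_dist_hat K L =
     (if K = {} \<and> L = {} then 0
      else if L = {} then max 1 (haus_dist K {0})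
      else if K = {} then max 1 (haus_dist L {0})
      else haus_dist K L)"

definition superlevel :: "(real \<Rightarrow> real) \<Rightarrow> ('a \<Rightarrow> ereal) \<Rightarrow> real \<Rightarrow> 'a set" where
  "superlevel \<zeta> u s = {x. zeta_ext \<zeta> (u x) \<ge> s}"

definition delta_H :: "(real \<Rightarrow> real) \<Rightarrow> ('a::real_normed_vector \<Rightarrow> ereal) \<Rightarrow> ('a \<Rightarrow> ereal) \<Rightarrow> ennreal" where
  "delta_H \<zeta> u v = (\<integral>\<^sup>+ s\<in>{0..}. ennreal (haus_dist_hat (superlevel \<zeta> u s) (superlevel \<zeta> v s)) \<partial>lborel)"

definition epi_converges :: "(nat \<Rightarrow> 'a::metric_space \<Rightarrow> ereal) \<Rightarrow> ('a \<Rightarrow> ereal) \<Rightarrow> bool" where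
  "epi_converges uk u \<longleftrightarrow>
     (\<forall>x. (\<forall>xk. xk \<longlonglongrightarrow> x \<longrightarrow> liminf (\<lambda>k. uk k (xk k)) \<ge> u x) \<and>
          (\<exists>xk. xk \<longlonglongrightarrow> x \<and> limsup (\<lambda>k. uk k (xk k)) \<le> u x))"

end

(*
  Since \<zeta> is strictly decreasing and positive, for \<zeta> t' < s \<le> \<zeta> t the superlevel set
  {\<zeta> \<circ> v \<ge> s} lies between the sublevel sets {v \<le> t} and {v < t'}. If
  \<delta>(v, w) < \<epsilon> (\<zeta> t - \<zeta> t'), some height s in that range has superlevel sets of v and w
  that are \<epsilon>-close for the extended Hausdorff distance; for \<epsilon> \<le> 1 neither of them is
  empty, so every point of {v \<le> t} is \<epsilon>-close to a point of {w < t'}.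
  With v = u, w = u_k this yields points x_k near x with u_k x_k < u x + \<epsilon>, and a
  diagonal choice over \<epsilon> gives the recovery sequence. With v = u_k, w = u it shows
  that u_k x_k \<le> t < t' < u x cannot happen for large k, since it would produce points
  near x where u < t', contradicting the lower semicontinuity of u.
*)
theory Submission
  imports Defs
begin

lemma eventually_exists_diagonal:
  fixes Q :: "nat \<Rightarrow> real \<Rightarrow> 'a \<Rightarrow> bool"
  assumes ev: "\<And>e. e > 0 \<Longrightarrow> eventually (\<lambda>k. \<exists>y. Q k e y) sequentially"
    and mono: "\<And>k e e' y. Q k e y \<Longrightarrow> e \<le> e' \<Longrightarrow> Q k e' y"
  obtains yk where "\<And>e. e > 0 \<Longrightarrow> eventually (\<lambda>k. Q k e (yk k)) sequentially"
proof -
  have "\<forall>m. \<exists>N. \<forall>k\<ge>N. \<exists>y. Q k (1 / real (Suc m)) y"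
    using ev[of "1 / real (Suc _)"] by (simp add: eventually_sequentially)
  then obtain N where N: "\<And>m k. k \<ge> N m \<Longrightarrow> \<exists>y. Q k (1 / real (Suc m)) y" by metis
  \<comment> \<open>At stage \<open>k\<close> use the finest precision \<open>1 / Suc m\<close> already available, i.e. with \<open>N m \<le> k\<close>.\<close>
  define mk where "mk k = (GREATEST m. m \<le> k \<and> N m \<le> k)" for k
  define yk where "yk k = (SOME y. Q k (1 / real (Suc (mk k))) y)" for k
  have "eventually (\<lambda>k. Q k e (yk k)) sequentially" if "e > 0" for e
  proof -
    obtain j where j: "1 / real (Suc j) < e"
      using nat_approx_posE[OF \<open>e > 0\<close>] by blast
    have "Q k e (yk k)" if "k \<ge> max j (N j)" for k
    proof -
      have j_ok: "j \<le> k \<and> N j \<le> k" using that by simp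
      have mk_ok: "mk k \<le> k \<and> N (mk k) \<le> k" unfolding mk_def
        by (rule GreatestI_nat[where P="\<lambda>m. m \<le> k \<and> N m \<le> k", OF j_ok]) auto
      have j_le: "j \<le> mk k" unfolding mk_def
        by (rule Greatest_le_nat[where P="\<lambda>m. m \<le> k \<and> N m \<le> k", OF j_ok]) auto
      have "\<exists>y. Q k (1 / real (Suc (mk k))) y" using N mk_ok by blast
      then have "Q k (1 / real (Suc (mk k))) (yk k)" unfolding yk_def by (rule someI_ex)
      moreover have "1 / real (Suc (mk k)) \<le> 1 / real (Suc j)"
        using j_le by (simp add: frac_le)
      then have "1 / real (Suc (mk k)) \<le> e" using j by linarith
      ultimately show ?thesis by (rule mono)
    qed
    then show ?thesis unfolding eventually_sequentially by blast
  qed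
  then show ?thesis by (rule that)
qed

lemma M0_pos: "\<zeta> \<in> M0 \<Longrightarrow> 0 < \<zeta> t"
  unfolding M0_def by auto

lemma M0_less_iff:
  assumes "\<zeta> \<in> M0"
  shows "\<zeta> s < \<zeta> t \<longleftrightarrow> t < s"
proof -
  have dec: "\<And>a b. a < b \<Longrightarrow> \<zeta> b < \<zeta> a" using assms unfolding M0_def by blast
  show ?thesis using dec[of s t] dec[of t s] by (cases s t rule: linorder_cases) auto
qed

lemma conv_coe_not_MInfty: "u \<in> conv_coe \<Longrightarrow> u x \<noteq> -\<infinity>"
  unfolding conv_coe_def by auto

lemma conv_coe_bounded_sublevel:
  assumes "u \<in> conv_coe"
  shows "bounded {x. u x \<le> ereal t}"
proof -
  have "eventually (\<lambda>x. ereal t < u x) at_infinity"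
    using assms unfolding conv_coe_def by (auto intro: order_tendstoD(1))
  then obtain b where b: "\<And>x. norm x \<ge> b \<Longrightarrow> ereal t < u x"
    unfolding eventually_at_infinity by auto
  have "{x. u x \<le> ereal t} \<subseteq> cball 0 b"
    using b by (auto simp: subset_iff) (meson linorder_not_le less_imp_le)
  then show ?thesis using bounded_subset by blast
qed

lemma conv_coe_lsc:
  assumes "u \<in> conv_coe" "ereal t < u x"
  shows "eventually (\<lambda>y. ereal t < u y) (nhds x)"
proof -
  have "closed {(x, r::real). u x \<le> ereal r}" using assms(1) unfolding conv_coe_def by auto
  then have "closed ((\<lambda>y. (y, t)) -` {(x, r::real). u x \<le> ereal r})"
    by (rule closed_vimage) (intro continuous_intros)
  then have "open (- ((\<lambda>y. (y, t)) -` {(x, r::real). u x \<le> ereal r}))" by (rule open_Compl)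
  moreover have "- ((\<lambda>y. (y, t)) -` {(x, r::real). u x \<le> ereal r}) = {y. ereal t < u y}"
    by (auto simp: not_le)
  ultimately have "open {y. ereal t < u y}" by simp
  then have "eventually (\<lambda>y. y \<in> {y. ereal t < u y}) (nhds x)"
    using assms(2) by (intro eventually_nhds_in_open) auto
  then show ?thesis by simp
qed

lemma haus_dist_hat_commute: "haus_dist_hat K L = haus_dist_hat L K"
  unfolding haus_dist_hat_def haus_dist_def by (simp add: max.commute)

lemma haus_dist_hat_ge_1:
  assumes "(K = {}) \<noteq> (L = {})"
  shows "1 \<le> haus_dist_hat K L"
  using assms unfolding haus_dist_hat_def by auto

lemma infdist_le_haus_dist_hat:
  fixes K L :: "'a::real_normed_vector set"
  assumes "bounded K" "y \<in> K" "L \<noteq> {}"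
  shows "infdist y L \<le> haus_dist_hat K L"
proof -
  obtain l where l: "l \<in> L" using assms(3) by blast
  obtain B where B: "\<And>x. x \<in> K \<Longrightarrow> norm x \<le> B" using assms(1) by (meson bounded_iff)
  have "infdist x L \<le> B + norm l" if "x \<in> K" for x
  proof -
    have "infdist x L \<le> dist x l" by (rule infdist_le[OF l])
    also have "\<dots> \<le> norm x + norm l" by (simp add: dist_norm norm_triangle_ineq4)
    finally show ?thesis using B[OF that] by simp
  qed
  then have "bdd_above ((\<lambda>x. infdist x L) ` K)" by (rule bdd_aboveI2)
  then have "infdist y L \<le> (SUP x\<in>K. infdist x L)" using assms(2) by (rule cSUP_upper[rotated])
  then show ?thesis using assms unfolding haus_dist_hat_def haus_dist_def by auto
qed

lemma delta_H_commute: "delta_H \<zeta> u v = delta_H \<zeta> v u"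
  unfolding delta_H_def by (simp add: haus_dist_hat_commute)

lemma delta_H_small_level:
  assumes small: "delta_H \<zeta> u v < ennreal (c * (q - p))" and "0 \<le> p" "p < q"
  obtains s where "p < s" "s < q" "haus_dist_hat (superlevel \<zeta> u s) (superlevel \<zeta> v s) < c"
proof -
  have "\<exists>s. p < s \<and> s < q \<and> haus_dist_hat (superlevel \<zeta> u s) (superlevel \<zeta> v s) < c"
  proof (rule ccontr)
    assume "\<not> ?thesis"
    then have large: "c \<le> haus_dist_hat (superlevel \<zeta> u s) (superlevel \<zeta> v s)"
      if "p < s" "s < q" for s
      using that by (meson not_less)
    have "0 < c * (q - p)"
    proof (rule ccontr)
      assume "\<not> 0 < c * (q - p)"
      then have "ennreal (c * (q - p)) = 0" by (simp add: ennreal_eq_0_iff)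
      then show False using small by simp
    qed
    then have "0 < c" using \<open>p < q\<close> by (simp add: zero_less_mult_iff)
    have "ennreal (c * (q - p)) = (\<integral>\<^sup>+ s. ennreal c * indicator {p<..<q} s \<partial>lborel)"
      using \<open>0 < c\<close> \<open>p < q\<close> by (simp add: nn_integral_cmult_indicator ennreal_mult)
    also have "\<dots> \<le> delta_H \<zeta> u v"
      unfolding delta_H_def
      by (rule nn_integral_mono)
        (use \<open>0 \<le> p\<close> large in \<open>auto simp: indicator_def intro: ennreal_leI\<close>)
    finally show False using small by simp
  qed
  then show thesis using that by blast
qed

lemma superlevel_subset_sublevel:
  assumes "\<zeta> \<in> M0" "\<zeta> t < s"
  shows "superlevel \<zeta> u s \<subseteq> {x. u x < ereal t}"
proof
  fix x assume "x \<in> superlevel \<zeta> u s"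
  then have "\<zeta> t < zeta_ext \<zeta> (u x)" using assms(2) unfolding superlevel_def by simp
  moreover have "0 < \<zeta> t" using M0_pos[OF assms(1)] .
  ultimately obtain r where "u x = ereal r" "\<zeta> t < \<zeta> r"
    by (cases "u x") (auto simp: zeta_ext_def)
  then show "x \<in> {x. u x < ereal t}" using M0_less_iff[OF assms(1)] by simp
qed

lemma mem_superlevel_if_le:
  assumes "\<zeta> \<in> M0" "u x \<noteq> -\<infinity>" "u x \<le> ereal t" "s \<le> \<zeta> t"
  shows "x \<in> superlevel \<zeta> u s"
proof -
  obtain r where r: "u x = ereal r" "r \<le> t" using assms(2,3) by (cases "u x") auto
  then have "\<zeta> t \<le> \<zeta> r" using M0_less_iff[OF assms(1), of r t] by auto
  then show ?thesis using r assms(4) unfolding superlevel_def zeta_ext_def by simp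
qed

lemma delta_H_small_imp_near_sublevel:
  fixes v w :: "'a::euclidean_space \<Rightarrow> ereal"
  assumes \<zeta>: "\<zeta> \<in> M0" and v: "v \<in> conv_coe" and "t < t'" "\<epsilon> \<le> 1"
    and small: "delta_H \<zeta> v w < ennreal (\<epsilon> * (\<zeta> t - \<zeta> t'))"
    and y: "v y \<le> ereal t"
  obtains z where "dist y z < \<epsilon>" "w z < ereal t'"
proof -
  have "0 \<le> \<zeta> t'" "\<zeta> t' < \<zeta> t"
    using M0_pos[OF \<zeta>] M0_less_iff[OF \<zeta>] \<open>t < t'\<close> by (auto simp: less_imp_le)
  with small obtain s where s: "\<zeta> t' < s" "s < \<zeta> t"
    and close: "haus_dist_hat (superlevel \<zeta> v s) (superlevel \<zeta> w s) < \<epsilon>"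
    by (rule delta_H_small_level)
  define K where "K = superlevel \<zeta> v s"
  define L where "L = superlevel \<zeta> w s"
  have "y \<in> K" unfolding K_def
    using \<zeta> conv_coe_not_MInfty[OF v] y s(2) by (intro mem_superlevel_if_le) auto
  have "K \<subseteq> {x. v x \<le> ereal t'}"
    unfolding K_def using superlevel_subset_sublevel[OF \<zeta> s(1)] by fastforce
  then have "bounded K" using conv_coe_bounded_sublevel[OF v] bounded_subset by blast
  have "L \<noteq> {}"
  proof
    assume "L = {}"
    then have "1 \<le> haus_dist_hat K L" using \<open>y \<in> K\<close> by (intro haus_dist_hat_ge_1) auto
    then show False using close \<open>\<epsilon> \<le> 1\<close> unfolding K_def L_def by linarith
  qed
  have "infdist y L < \<epsilon>"
    using infdist_le_haus_dist_hat[OF \<open>bounded K\<close> \<open>y \<in> K\<close> \<open>L \<noteq> {}\<close>] close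
    unfolding K_def L_def by linarith
  then have "(INF z\<in>L. dist y z) < \<epsilon>" using \<open>L \<noteq> {}\<close> by (simp add: infdist_notempty)
  then obtain z where "z \<in> L" "dist y z < \<epsilon>"
    using cInf_lessD[of "(\<lambda>z. dist y z) ` L" \<epsilon>] \<open>L \<noteq> {}\<close> by auto
  moreover have "L \<subseteq> {x. w x < ereal t'}"
    unfolding L_def by (rule superlevel_subset_sublevel[OF \<zeta> s(1)])
  ultimately show ?thesis using that by blast
qed

lemma delta_H_liminf_inequality:
  fixes uk :: "nat \<Rightarrow> 'a::euclidean_space \<Rightarrow> ereal"
  assumes \<zeta>: "\<zeta> \<in> M0" and uk: "\<And>k. uk k \<in> conv_coe" and u: "u \<in> conv_coe"
    and lim: "(\<lambda>k. delta_H \<zeta> (uk k) u) \<longlonglongrightarrow> 0" and xk: "xk \<longlonglongrightarrow> x"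
  shows "u x \<le> liminf (\<lambda>k. uk k (xk k))"
  unfolding le_Liminf_iff
proof (intro allI impI)
  fix y assume "y < u x"
  then obtain t where "y < ereal t" "ereal t < u x" using ereal_dense2 by blast
  then obtain t' where "ereal t < ereal t'" "ereal t' < u x" using ereal_dense2 by blast
  then have "t < t'" by simp
  obtain e where "e > 0" and e: "\<And>z. dist z x < e \<Longrightarrow> ereal t' < u z"
    using conv_coe_lsc[OF u \<open>ereal t' < u x\<close>] unfolding eventually_nhds_metric by blast
  define \<epsilon> where "\<epsilon> = min 1 (e / 2)"
  have "0 < \<epsilon>" "\<epsilon> \<le> 1" "\<epsilon> \<le> e / 2" using \<open>e > 0\<close> unfolding \<epsilon>_def by auto
  moreover have "\<zeta> t' < \<zeta> t" using M0_less_iff[OF \<zeta>] \<open>t < t'\<close> by simp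
  ultimately have "eventually (\<lambda>k. delta_H \<zeta> (uk k) u < ennreal (\<epsilon> * (\<zeta> t - \<zeta> t'))) sequentially"
    using lim by (intro order_tendstoD(2)) auto
  moreover have "eventually (\<lambda>k. dist (xk k) x < e / 2) sequentially"
    using xk half_gt_zero[OF \<open>e > 0\<close>] unfolding tendsto_iff by blast
  ultimately show "eventually (\<lambda>k. y < uk k (xk k)) sequentially"
  proof eventually_elim
    case (elim k)
    show ?case
    proof (rule ccontr)
      assume "\<not> y < uk k (xk k)"
      then have "uk k (xk k) \<le> ereal t" using \<open>y < ereal t\<close> by (simp add: not_less)
      then obtain z where z: "dist (xk k) z < \<epsilon>" "u z < ereal t'"
        using delta_H_small_imp_near_sublevel[OF \<zeta> uk \<open>t < t'\<close> \<open>\<epsilon> \<le> 1\<close> elim(1)] by blast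
      have "dist z x \<le> dist (xk k) z + dist (xk k) x" by (rule dist_triangle3)
      then have "dist z x < e" using z(1) elim(2) \<open>\<epsilon> \<le> e / 2\<close> by linarith
      then show False using e z(2) by (meson order.asym)
    qed
  qed
qed

lemma delta_H_recovery_sequence:
  fixes uk :: "nat \<Rightarrow> 'a::euclidean_space \<Rightarrow> ereal"
  assumes \<zeta>: "\<zeta> \<in> M0" and u: "u \<in> conv_coe"
    and lim: "(\<lambda>k. delta_H \<zeta> (uk k) u) \<longlonglongrightarrow> 0"
  shows "\<exists>xk. xk \<longlonglongrightarrow> x \<and> limsup (\<lambda>k. uk k (xk k)) \<le> u x"
proof (cases "u x")
  case PInf
  then show ?thesis by (intro exI[of _ "\<lambda>_. x"]) simp
next
  case MInf
  then show ?thesis using conv_coe_not_MInfty[OF u] by simp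
next
  case (real a)
  define Q where "Q k e y \<longleftrightarrow> dist y x < e \<and> uk k y < ereal (a + e)" for k e y
  have "eventually (\<lambda>k. \<exists>y. Q k e y) sequentially" if "e > 0" for e
  proof -
    define \<epsilon> where "\<epsilon> = min 1 e"
    have "0 < \<epsilon>" "\<epsilon> \<le> 1" "\<epsilon> \<le> e" using \<open>e > 0\<close> unfolding \<epsilon>_def by auto
    moreover have "\<zeta> (a + \<epsilon>) < \<zeta> a" using M0_less_iff[OF \<zeta>] \<open>0 < \<epsilon>\<close> by simp
    ultimately have "eventually (\<lambda>k. delta_H \<zeta> u (uk k) < ennreal (\<epsilon> * (\<zeta> a - \<zeta> (a + \<epsilon>)))) sequentially"
      using lim by (intro order_tendstoD(2)) (auto simp: delta_H_commute)
    then show ?thesis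
    proof (rule eventually_mono)
      fix k assume small: "delta_H \<zeta> u (uk k) < ennreal (\<epsilon> * (\<zeta> a - \<zeta> (a + \<epsilon>)))"
      have "a < a + \<epsilon>" "u x \<le> ereal a" using \<open>0 < \<epsilon>\<close> real by auto
      then obtain z where "dist x z < \<epsilon>" "uk k z < ereal (a + \<epsilon>)"
        using delta_H_small_imp_near_sublevel[OF \<zeta> u _ \<open>\<epsilon> \<le> 1\<close> small] by blast
      then have "Q k e z"
        unfolding Q_def using \<open>\<epsilon> \<le> e\<close> by (auto simp: dist_commute intro: less_le_trans)
      then show "\<exists>y. Q k e y" ..
    qed
  qed
  moreover have "Q k e' y" if "Q k e y" "e \<le> e'" for k e e' y
    using that unfolding Q_def by (auto intro: less_le_trans)
  ultimately obtain yk where yk: "\<And>e. e > 0 \<Longrightarrow> eventually (\<lambda>k. Q k e (yk k)) sequentially"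
    using eventually_exists_diagonal by blast
  have "yk \<longlonglongrightarrow> x"
  proof (rule tendstoI)
    fix e :: real assume "e > 0"
    show "eventually (\<lambda>k. dist (yk k) x < e) sequentially"
      using yk[OF \<open>e > 0\<close>] by (rule eventually_mono) (simp add: Q_def)
  qed
  moreover have "limsup (\<lambda>k. uk k (yk k)) \<le> u x"
    unfolding Limsup_le_iff real
  proof (intro allI impI)
    fix w assume "ereal a < w"
    then obtain w' where "ereal a < ereal w'" "ereal w' < w" using ereal_dense2 by blast
    then have "eventually (\<lambda>k. Q k (w' - a) (yk k)) sequentially" by (intro yk) simp
    then show "eventually (\<lambda>k. uk k (yk k) < w) sequentially"
      by eventually_elim (use \<open>ereal w' < w\<close> in \<open>auto simp: Q_def intro: less_trans\<close>)
  qed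
  ultimately show ?thesis by blast
qed

theorem proposition5p9:
  fixes \<zeta> :: "real \<Rightarrow> real"
    and uk :: "nat \<Rightarrow> 'a::euclidean_space \<Rightarrow> ereal"
    and u :: "'a \<Rightarrow> ereal"
  assumes "\<zeta> \<in> M0"
    and "\<And>k. uk k \<in> conv_coe"
    and "u \<in> conv_coe"
    and "(\<lambda>k. delta_H \<zeta> (uk k) u) \<longlonglongrightarrow> 0"
  shows "epi_converges uk u"
  unfolding epi_converges_def
  using delta_H_liminf_inequality[OF assms] delta_H_recovery_sequence[OF assms(1,3,4)] by blast

end
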